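(* Let $p$ be a prime and $n, k$ positive integers, $d = \gcd(n,k)$, and suppose $p \nmid \frac{k}{d}$. Let $L(X) = \sum_{i=0}^t \alpha_i X^{p^i}$, $\alpha_i \in \mathbb{F}_p$, be a $p$-linearized polynomial without multiple roots, and let $L'$ be a $p$-linearized polynomial over $\mathbb{F}_p$ with $X - X^{p^k} = L \circ L'(X)$. Let $a \in \mathbb{F}_{p^n}$ and let $\delta$ be any element of $\mathbb{F}_{p^{2n}}$ with $S_n^{2n}(\delta) = 1$. Then the equation $L(X) = a$ has a solution in $\mathbb{F}_{p^n}$ if and only if $L' \circ T_d^n(a) = 0$. Moreover, $$x_0 = \frac{d}{k} \cdot L' \circ T_k^{[n,k]}(\delta \cdot a)$$ is a solution of $L(X) = a$, and it belongs to $\mathbb{F}_{p^n}$ under the condition $L' \circ T_d^n(a) = 0$.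
   Context: For positive integers $l \mid m$ define $T_l^m(X) = \sum_{i=0}^{m/l - 1} X^{p^{li}}$ and $S_l^m(X) = \sum_{i=0}^{m/l-1} (-1)^i X^{p^{li}}$; in particular $S_n^{2n}(X) = X - X^{p^n}$. $[n,k]$ denotes the least common multiple of $n$ and $k$. Since $p \nmid k/d$, $\frac{d}{k}$ denotes the inverse of $\frac{k}{d}$ in $\mathbb{F}_p$. $\circ$ denotes composition. *)

theory Defs
  imports "HOL-Computational_Algebra.Polynomial"
begin

(* The subset {x. x^q = x} of the ambient field; for q = p^m in an algebraically
   closed field of characteristic p this is the finite field F_{p^m}. *)
definition Fq :: "nat \<Rightarrow> 'a::field set" where
  "Fq q = {x. x ^ q = x}"

definition alg_closed :: "'a::field itself \<Rightarrow> bool" where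
  "alg_closed _ \<longleftrightarrow> (\<forall>q::'a poly. 0 < degree q \<longrightarrow> (\<exists>x. poly q x = 0))"

definition p_linearized :: "nat \<Rightarrow> 'a::field poly \<Rightarrow> bool" where
  "p_linearized p L \<longleftrightarrow>
     (\<forall>i. coeff L i \<noteq> 0 \<longrightarrow> (\<exists>j. i = p ^ j) \<and> coeff L i \<in> Fq p)"

definition T :: "nat \<Rightarrow> nat \<Rightarrow> nat \<Rightarrow> 'a::field \<Rightarrow> 'a" where
  "T p l m x = (\<Sum>i<m div l. x ^ (p ^ (l * i)))"

definition S :: "nat \<Rightarrow> nat \<Rightarrow> nat \<Rightarrow> 'a::field \<Rightarrow> 'a" where
  "S p l m x = (\<Sum>i<m div l. (-1) ^ i * x ^ (p ^ (l * i)))"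

end

theory Submission
  imports Defs "HOL-Number_Theory.Cong"
begin

(* Everything rests on the Frobenius x \<mapsto> x^p: it is additive in characteristic p and
   commutes with every p-linearized polynomial over F_p, so such polynomials commute with
   each other and with the sums T.

   Necessity: if L x = a with x in F_{p^n}, then T_d^n(a) = L z for z = T_d^n(x), and z lies
   in F_{p^d}, which is contained in F_{p^k}; hence L'(L z) = L(L' z) = z - z^{p^k} = 0.

   Solution: S_n^{2n}(\<delta>) = 1 says \<delta>^{p^n} = \<delta> - 1, so \<delta>^{p^[n,k]} = \<delta> - k/d.
   For y = T_k^{[n,k]}(\<delta> a) the sum y - y^{p^k} telescopes to (k/d) a, whence
   L(L' y) = (k/d) a. Moreover y^{p^n} = y - T_k^{[n,k]}(a) = y - T_d^n(a), the last step
   because multiplication by k/d permutes the residues modulo n/d; so L' y is in F_{p^n} as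
   soon as L'(T_d^n(a)) = 0. *)

lemma power_power_fixed:
  fixes x :: "'a::monoid_mult"
  assumes "x ^ q = x"
  shows "x ^ (q ^ m) = x"
proof (induction m)
  case (Suc m)
  have "x ^ (q ^ Suc m) = (x ^ (q ^ m)) ^ q"
    by (metis power_Suc2 power_mult)
  then show ?case using Suc assms by simp
qed simp

lemma power_power_mod:
  fixes x :: "'a::monoid_mult"
  assumes "x ^ (p ^ n) = x"
  shows "x ^ (p ^ m) = x ^ (p ^ (m mod n))"
proof -
  have "x ^ (p ^ m) = (x ^ ((p ^ n) ^ (m div n))) ^ (p ^ (m mod n))"
    by (metis div_mult_mod_eq power_add power_mult mult.commute)
  then show ?thesis
    using power_power_fixed[OF assms] by simp
qed

lemma bij_betw_mult_mod:
  fixes c n :: nat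
  assumes "coprime c n"
  shows "bij_betw (\<lambda>i. c * i mod n) {..<n} {..<n}"
proof -
  have inj: "inj_on (\<lambda>i. c * i mod n) {..<n}"
  proof (rule inj_onI)
    fix i j
    assume "i \<in> {..<n}" "j \<in> {..<n}" "c * i mod n = c * j mod n"
    then show "i = j"
      using cong_mult_lcancel_nat[OF assms] by (simp add: cong_def)
  qed
  have "(\<lambda>i. c * i mod n) ` {..<n} = {..<n}"
    by (rule endo_inj_surj[OF finite_lessThan _ inj]) auto
  with inj show ?thesis
    by (simp add: bij_betw_def)
qed

lemma S_n_2n:
  assumes "0 < n"
  shows "S p n (2 * n) x = x - x ^ (p ^ n)"
  using assms by (simp add: S_def numeral_2_eq_2)

lemma T_lcm_eq_T_gcd:
  fixes x :: "'a::field"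
  assumes "0 < n" "0 < k" "x \<in> Fq (p ^ n)"
  shows "T p k (lcm n k) x = T p (gcd n k) n x"
proof -
  define d where "d = gcd n k"
  obtain n' k' where "n = n' * d" "k = k' * d" "coprime n' k'"
    using gcd_coprime_exists[of n k] assms(1) unfolding d_def by auto
  then have n: "n = d * n'" and k: "k = d * k'" and cop: "coprime k' n'"
    by (simp_all add: mult.commute coprime_commute)
  have "d > 0"
    using assms(1) by (simp add: d_def)
  have x: "x ^ (p ^ n) = x"
    using assms(3) by (simp add: Fq_def)
  have "d * lcm n k = n * k"
    using prod_gcd_lcm_nat[of n k] by (simp add: d_def)
  also have "\<dots> = d * (k * n')"
    by (simp add: n)
  finally have "lcm n k = k * n'"
    using \<open>d > 0\<close> by simp
  then have "T p k (lcm n k) x = (\<Sum>i<n'. x ^ (p ^ (k * i)))"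
    using assms(2) by (simp add: T_def)
  also have "\<dots> = (\<Sum>i<n'. x ^ (p ^ (d * (k' * i mod n'))))"
  proof (rule sum.cong[OF refl])
    fix i
    have "d * (k' * i) mod n = d * (k' * i mod n')"
      unfolding n by (rule mod_mult_mult1)
    then show "x ^ (p ^ (k * i)) = x ^ (p ^ (d * (k' * i mod n')))"
      using power_power_mod[OF x, of "k * i"] by (simp add: k mult.assoc)
  qed
  also have "\<dots> = (\<Sum>i<n'. x ^ (p ^ (d * i)))"
    using sum.reindex_bij_betw[OF bij_betw_mult_mod[OF cop]] .
  also have "\<dots> = T p d n x"
    using \<open>d > 0\<close> by (simp add: T_def n)
  finally show ?thesis
    by (simp add: d_def)
qed

lemma poly_poly_of_pcompose_eq:
  fixes L L' :: "'a::comm_ring_1 poly"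
  assumes "pcompose L L' = [:0, 1:] - monom 1 q"
  shows "poly L (poly L' z) = z - z ^ q"
  using arg_cong[OF assms, of "\<lambda>P. poly P z"] by (simp add: poly_pcompose poly_monom poly_diff)

lemma p_linearized_coeffD:
  assumes "p_linearized p L" "coeff L i \<noteq> 0"
  shows "\<exists>j. i = p ^ j" "coeff L i ^ p = coeff L i"
  using assms unfolding p_linearized_def Fq_def by auto

lemma poly_p_linearized_0:
  assumes "p_linearized p L" "0 < p"
  shows "poly L 0 = 0"
proof -
  have "coeff L 0 = 0"
    using p_linearized_coeffD(1)[OF assms(1), of 0] assms(2) by (metis power_not_zero neq0_conv)
  then show ?thesis
    by (simp add: poly_0_coeff_0)
qed

context
  fixes p :: nat
  assumes char_p: "CHAR('a::field) = p" and prime_p: "prime p"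
begin

lemma frobenius_add: "(x + y) ^ (p ^ m) = x ^ (p ^ m) + y ^ (p ^ m)" for x y :: 'a
  using char_p prime_p freshmans_dream'[of "p ^ m" m x y] by simp

lemma frobenius_diff: "(x - y) ^ (p ^ m) = x ^ (p ^ m) - y ^ (p ^ m)" for x y :: 'a
  using frobenius_add[of "x - y" y m] by (simp add: algebra_simps)

lemma frobenius_sum: "(sum f A) ^ (p ^ m) = (\<Sum>i\<in>A. f i ^ (p ^ m))" for f :: "'b \<Rightarrow> 'a"
  using char_p prime_p freshmans_dream_sum'[of "p ^ m" m f A] by simp

lemma frobenius_of_nat: "(of_nat j :: 'a) ^ (p ^ m) = of_nat j"
  using frobenius_sum[of "\<lambda>_. 1" "{..<j}" m] by simp

lemma poly_p_linearized_frobenius: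
  fixes L :: "'a poly"
  assumes "p_linearized p L"
  shows "(poly L x) ^ (p ^ m) = poly L (x ^ (p ^ m))"
proof -
  have "(coeff L i * x ^ i) ^ (p ^ m) = coeff L i * (x ^ (p ^ m)) ^ i" for i
  proof (cases "coeff L i = 0")
    case False
    then have "coeff L i ^ (p ^ m) = coeff L i"
      using p_linearized_coeffD(2)[OF assms] power_power_fixed by blast
    then show ?thesis
      by (simp add: power_mult_distrib mult.commute flip: power_mult)
  qed (use prime_gt_0_nat[OF prime_p] in simp)
  then show ?thesis
    by (simp add: poly_altdef frobenius_sum)
qed

lemma poly_p_linearized_add:
  fixes L :: "'a poly"
  assumes "p_linearized p L"
  shows "poly L (x + y) = poly L x + poly L y"
proof -
  have "coeff L i * (x + y) ^ i = coeff L i * x ^ i + coeff L i * y ^ i" for i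
  proof (cases "coeff L i = 0")
    case False
    then obtain j where "i = p ^ j"
      using p_linearized_coeffD(1)[OF assms] by blast
    then show ?thesis
      by (simp add: frobenius_add algebra_simps)
  qed simp
  then show ?thesis
    by (simp add: poly_altdef sum.distrib)
qed

lemma poly_p_linearized_diff:
  fixes L :: "'a poly"
  assumes "p_linearized p L"
  shows "poly L (x - y) = poly L x - poly L y"
  using poly_p_linearized_add[OF assms, of "x - y" y] by simp

lemma poly_p_linearized_sum:
  fixes L :: "'a poly"
  assumes "p_linearized p L"
  shows "poly L (sum f A) = (\<Sum>i\<in>A. poly L (f i))"
  using poly_p_linearized_0[OF assms prime_gt_0_nat[OF prime_p]]
  by (induction A rule: infinite_finite_induct) (simp_all add: poly_p_linearized_add[OF assms])

lemma poly_p_linearized_mult_Fp: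
  fixes L :: "'a poly"
  assumes "p_linearized p L" "c ^ p = c"
  shows "poly L (c * x) = c * poly L x"
proof -
  have "coeff L i * (c * x) ^ i = c * (coeff L i * x ^ i)" for i
  proof (cases "coeff L i = 0")
    case False
    then obtain j where "i = p ^ j"
      using p_linearized_coeffD(1)[OF assms(1)] by blast
    then show ?thesis
      using power_power_fixed[OF assms(2)] by (simp add: power_mult_distrib)
  qed simp
  then show ?thesis
    unfolding poly_altdef sum_distrib_left by (intro sum.cong) auto
qed

lemma poly_p_linearized_poly:
  fixes L L' :: "'a poly"
  assumes "p_linearized p L" "p_linearized p L'"
  shows "poly L (poly L' z) =
    (\<Sum>i\<le>degree L. \<Sum>j\<le>degree L'. coeff L i * coeff L' j * z ^ (i * j))"
  unfolding poly_altdef[of L]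
proof (rule sum.cong[OF refl])
  fix i
  show "coeff L i * poly L' z ^ i = (\<Sum>j\<le>degree L'. coeff L i * coeff L' j * z ^ (i * j))"
  proof (cases "coeff L i = 0")
    case False
    then obtain m where "i = p ^ m"
      using p_linearized_coeffD(1)[OF assms(1)] by blast
    then have "poly L' z ^ i = poly L' (z ^ i)"
      using poly_p_linearized_frobenius[OF assms(2)] by simp
    then show ?thesis
      by (simp add: poly_altdef sum_distrib_left power_mult mult.assoc)
  qed simp
qed

lemma poly_p_linearized_commute:
  fixes L L' :: "'a poly"
  assumes "p_linearized p L" "p_linearized p L'"
  shows "poly L (poly L' z) = poly L' (poly L z)"
  unfolding poly_p_linearized_poly[OF assms] poly_p_linearized_poly[OF assms(2,1)]
  by (subst sum.swap) (simp add: mult.commute mult.left_commute)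

lemma T_frobenius: "(T p l m x) ^ (p ^ j) = T p l m (x ^ (p ^ j))" for x :: 'a
  unfolding T_def frobenius_sum by (simp add: mult.commute flip: power_mult)

lemma T_diff: "T p l m (x - y) = T p l m x - T p l m y" for x y :: 'a
  unfolding T_def by (simp add: frobenius_diff sum_subtractf)

lemma poly_p_linearized_T:
  fixes L :: "'a poly"
  assumes "p_linearized p L"
  shows "poly L (T p l m x) = T p l m (poly L x)"
  unfolding T_def by (simp add: poly_p_linearized_sum[OF assms] poly_p_linearized_frobenius[OF assms])

lemma T_telescope:
  fixes x :: 'a
  assumes "0 < l" "l dvd m"
  shows "T p l m x - (T p l m x) ^ (p ^ l) = x - x ^ (p ^ m)"
proof -
  obtain N where m: "m = l * N"
    using assms(2) by blast
  define f where "f i = x ^ (p ^ (l * i))" for i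
  have "T p l m x = (\<Sum>i<N. f i)"
    using assms(1) by (simp add: T_def f_def m)
  moreover have "(T p l m x) ^ (p ^ l) = (\<Sum>i<N. f (Suc i))"
    unfolding T_frobenius using assms(1) by (simp add: T_def f_def m power_add flip: power_mult)
  ultimately have "T p l m x - (T p l m x) ^ (p ^ l) = f 0 - f N"
    by (simp add: sum_lessThan_telescope' flip: sum_subtractf)
  then show ?thesis
    by (simp add: f_def m)
qed

lemma T_in_Fq:
  fixes x :: 'a
  assumes "0 < d" "d dvd n" "x \<in> Fq (p ^ n)"
  shows "T p d n x \<in> Fq (p ^ d)"
  using T_telescope[OF assms(1,2), of x] assms(3) by (simp add: Fq_def)

lemma frobenius_iterate_shift:
  fixes \<delta> :: 'a
  assumes "\<delta> ^ (p ^ n) = \<delta> - 1"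
  shows "\<delta> ^ (p ^ (n * m)) = \<delta> - of_nat m"
proof (induction m)
  case (Suc m)
  have "\<delta> ^ (p ^ (n * Suc m)) = (\<delta> ^ (p ^ (n * m))) ^ (p ^ n)"
    by (simp add: power_add mult.commute flip: power_mult)
  also have "\<dots> = \<delta> - of_nat (Suc m)"
    using Suc assms by (simp add: frobenius_diff frobenius_of_nat)
  finally show ?case .
qed simp

lemma T_lcm_twisted_telescope:
  fixes a \<delta> :: 'a
  assumes "0 < n" "0 < k" "\<delta> ^ (p ^ n) = \<delta> - 1" "a \<in> Fq (p ^ n)"
  defines "y \<equiv> T p k (lcm n k) (\<delta> * a)"
  shows "y - y ^ (p ^ k) = of_nat (k div gcd n k) * a"
proof -
  have "lcm n k = n * (k div gcd n k)"
    by (simp add: lcm_nat_def div_mult_swap)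
  then have "(\<delta> * a) ^ (p ^ lcm n k) = (\<delta> - of_nat (k div gcd n k)) * a"
    using frobenius_iterate_shift[OF assms(3)] power_power_fixed[of a "p ^ n"] assms(4)
    by (simp add: Fq_def power_mult_distrib power_mult)
  then show ?thesis
    unfolding y_def T_telescope[OF assms(2) dvd_lcm2] by (simp add: algebra_simps)
qed

lemma T_twisted_frobenius:
  fixes a \<delta> :: 'a
  assumes "\<delta> ^ (p ^ n) = \<delta> - 1" "a \<in> Fq (p ^ n)"
  shows "(T p l m (\<delta> * a)) ^ (p ^ n) = T p l m (\<delta> * a) - T p l m a"
proof -
  have "(\<delta> * a) ^ (p ^ n) = \<delta> * a - a"
    using assms by (simp add: Fq_def power_mult_distrib left_diff_distrib)
  then show ?thesis
    by (simp add: T_frobenius T_diff)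
qed

lemma T_of_image_in_kernel:
  fixes L L' :: "'a poly"
  assumes "p_linearized p L" "p_linearized p L'"
    and "pcompose L L' = [:0, 1:] - monom 1 (p ^ k)"
    and "0 < n" "x \<in> Fq (p ^ n)"
  shows "poly L' (T p (gcd n k) n (poly L x)) = 0"
proof -
  define z where "z = T p (gcd n k) n x"
  obtain j where k: "k = gcd n k * j"
    using gcd_dvd2 by (rule dvdE)
  have "z \<in> Fq (p ^ gcd n k)"
    unfolding z_def using assms(4,5) by (intro T_in_Fq) auto
  then have "z ^ (p ^ k) = z"
    using power_power_fixed[of z "p ^ gcd n k" j] by (subst k) (simp add: Fq_def power_mult)
  moreover have "poly L' (T p (gcd n k) n (poly L x)) = poly L (poly L' z)"
    unfolding z_def
    by (simp add: poly_p_linearized_T[OF assms(1)] poly_p_linearized_commute[OF assms(1,2)])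
  ultimately show ?thesis
    by (simp add: poly_poly_of_pcompose_eq[OF assms(3)])
qed

lemma twisted_trace_solution:
  fixes L L' :: "'a poly" and a \<delta> :: 'a
  assumes "p_linearized p L" "pcompose L L' = [:0, 1:] - monom 1 (p ^ k)"
    and "0 < n" "0 < k" "\<not> p dvd (k div gcd n k)"
    and "\<delta> ^ (p ^ n) = \<delta> - 1" "a \<in> Fq (p ^ n)"
  shows "poly L (inverse (of_nat (k div gcd n k)) * poly L' (T p k (lcm n k) (\<delta> * a))) = a"
proof -
  define c :: 'a where "c = inverse (of_nat (k div gcd n k))"
  have "of_nat (k div gcd n k) \<noteq> (0 :: 'a)"
    using assms(5) char_p by (simp add: of_nat_eq_0_iff_char_dvd)
  moreover have "c ^ p = c"
    using frobenius_of_nat[of _ 1] by (simp add: c_def power_inverse)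
  ultimately show ?thesis
    unfolding c_def[symmetric]
    by (simp add: poly_p_linearized_mult_Fp[OF assms(1)] poly_poly_of_pcompose_eq[OF assms(2)]
        T_lcm_twisted_telescope[OF assms(3,4,6,7)] c_def)
qed

lemma twisted_trace_in_Fq:
  fixes L' :: "'a poly" and a \<delta> :: 'a
  assumes "p_linearized p L'" "0 < n" "0 < k"
    and "\<delta> ^ (p ^ n) = \<delta> - 1" "a \<in> Fq (p ^ n)"
    and "poly L' (T p (gcd n k) n a) = 0"
  shows "inverse (of_nat (k div gcd n k)) * poly L' (T p k (lcm n k) (\<delta> * a)) \<in> Fq (p ^ n)"
proof -
  define y where "y = T p k (lcm n k) (\<delta> * a)"
  have "poly L' y ^ (p ^ n) = poly L' y"
    using assms(4-6)
    by (simp add: y_def poly_p_linearized_frobenius[OF assms(1)] T_twisted_frobenius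
        poly_p_linearized_diff[OF assms(1)] T_lcm_eq_T_gcd[OF assms(2,3)])
  then show ?thesis
    by (simp add: Fq_def power_mult_distrib power_inverse frobenius_of_nat flip: y_def)
qed

end

theorem theorem2:
  fixes p n k d :: nat and L L' :: "'a::field poly" and a \<delta> :: 'a
  assumes "prime p" and "CHAR('a) = p" and "alg_closed TYPE('a)"
    and "0 < n" and "0 < k" and "d = gcd n k" and "\<not> p dvd (k div d)"
    and "p_linearized p L" and "rsquarefree L"
    and "p_linearized p L'"
    and "pcompose L L' = [:0, 1:] - monom 1 (p ^ k)"
    and "a \<in> Fq (p ^ n)"
    and "\<delta> \<in> Fq (p ^ (2 * n))" and "S p n (2 * n) \<delta> = 1"
  shows "((\<exists>x \<in> Fq (p ^ n). poly L x = a) \<longleftrightarrow> poly L' (T p d n a) = 0)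
    \<and> (let x0 = inverse (of_nat (k div d)) * poly L' (T p k (lcm n k) (\<delta> * a))
       in poly L x0 = a \<and> (poly L' (T p d n a) = 0 \<longrightarrow> x0 \<in> Fq (p ^ n)))"
proof -
  note char = assms(2,1)
  have "\<delta> - \<delta> ^ (p ^ n) = 1"
    using assms(14) by (simp only: S_n_2n[OF assms(4)])
  then have \<delta>: "\<delta> ^ (p ^ n) = \<delta> - 1"
    by (simp add: eq_diff_eq diff_eq_eq add.commute)
  define x0 where "x0 = inverse (of_nat (k div d)) * poly L' (T p k (lcm n k) (\<delta> * a))"
  have solution: "poly L x0 = a"
    using twisted_trace_solution[OF char assms(8,11,4,5) _ \<delta> assms(12)] assms(6,7)
    by (simp add: x0_def)
  have in_Fq: "x0 \<in> Fq (p ^ n)" if "poly L' (T p d n a) = 0"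
    using twisted_trace_in_Fq[OF char assms(10,4,5) \<delta> assms(12)] that assms(6)
    by (simp add: x0_def)
  have necessary: "poly L' (T p d n a) = 0" if "x \<in> Fq (p ^ n)" "poly L x = a" for x
    using T_of_image_in_kernel[OF char assms(8,10,11,4) that(1)] that(2) assms(6) by simp
  have "(\<exists>x \<in> Fq (p ^ n). poly L x = a) \<longleftrightarrow> poly L' (T p d n a) = 0"
    using necessary solution in_Fq by blast
  then show ?thesis
    using solution in_Fq unfolding Let_def x0_def[symmetric] by blast
qed

end
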